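(* Let $n\ge 1$, let $\delta>0$, let $\hat{\mathbf{B}}_t\in\mathbb{R}^{n\times n}$ be a symmetric positive definite matrix, and let $\mathbf{v}_t,\hat{\mathbf{r}}_t\in\mathbb{R}^n$. Consider the semidefinite program \[ \hat{\mathbf{B}}_{t+1}=\operatorname*{argmin}_{\mathbf{Z}}\ \operatorname{tr}\!\left[\hat{\mathbf{B}}_t^{-1}(\mathbf{Z}-\delta\mathbf{I})\right]-\log\det\!\left[\hat{\mathbf{B}}_t^{-1}(\mathbf{Z}-\delta\mathbf{I})\right]-n \quad\text{s.t.}\quad \mathbf{Z}\mathbf{v}_t=\hat{\mathbf{r}}_t,\ \ \mathbf{Z}\succeq\mathbf{0}, \] where $\mathbf{Z}$ ranges over symmetric $n\times n$ matrices (with the objective defined where $\mathbf{Z}-\delta\mathbf{I}\succ\mathbf{0}$). Define the corrected gradient variation $\tilde{\mathbf{r}}_t:=\hat{\mathbf{r}}_t-\delta\mathbf{v}_t$. If $\tilde{\mathbf{r}}_t^T\mathbf{v}_t=(\hat{\mathbf{r}}_t-\delta\mathbf{v}_t)^T\mathbf{v}_t>0$, then the solution $\hat{\mathbf{B}}_{t+1}$ of this program can be written as \[ \hat{\mathbf{B}}_{t+1}=\hat{\mathbf{B}}_t+\frac{\tilde{\mathbf{r}}_t\tilde{\mathbf{r}}_t^T}{\mathbf{v}_t^T\tilde{\mathbf{r}}_t}-\frac{\hat{\mathbf{B}}_t\mathbf{v}_t\mathbf{v}_t^T\hat{\mathbf{B}}_t}{\mathbf{v}_t^T\hat{\mathbf{B}}_t\mathbf{v}_t}+\delta\mathbf{I}.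 \]
   Context: $\mathbf{I}$ denotes the $n\times n$ identity matrix; $\succeq$ and $\succ$ denote the positive semidefinite and positive definite orders on symmetric matrices. *)

theory Defs
  imports "HOL-Analysis.Analysis"
begin

definition sym_mat :: "real^'n^'n \<Rightarrow> bool" where
  "sym_mat A \<longleftrightarrow> transpose A = A"

definition psd_mat :: "real^'n^'n \<Rightarrow> bool" where
  "psd_mat A \<longleftrightarrow> sym_mat A \<and> (\<forall>x. 0 \<le> x \<bullet> (A *v x))"

definition pd_mat :: "real^'n^'n \<Rightarrow> bool" where
  "pd_mat A \<longleftrightarrow> sym_mat A \<and> (\<forall>x. x \<noteq> 0 \<longrightarrow> 0 < x \<bullet> (A *v x))"

definition outer :: "real^'n \<Rightarrow> real^'n \<Rightarrow> real^'n^'n" where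
  "outer a b = (\<chi> i j. a $ i * b $ j)"

definition sdp_obj :: "real^'n^'n \<Rightarrow> real \<Rightarrow> real^'n^'n \<Rightarrow> real" where
  "sdp_obj B \<delta> Z =
     trace (matrix_inv B ** (Z - \<delta> *\<^sub>R mat 1))
     - ln (det (matrix_inv B ** (Z - \<delta> *\<^sub>R mat 1)))
     - real CARD('n)"

(* feasible set, restricted to the domain where the objective is defined *)
definition sdp_feasible :: "real \<Rightarrow> real^'n \<Rightarrow> real^'n \<Rightarrow> (real^'n^'n) set" where
  "sdp_feasible \<delta> v r = {Z. sym_mat Z \<and> Z *v v = r \<and> psd_mat Z \<and> pd_mat (Z - \<delta> *\<^sub>R mat 1)}"

definition is_sdp_solution :: "real^'n^'n \<Rightarrow> real \<Rightarrow> real^'n \<Rightarrow> real^'n \<Rightarrow> real^'n^'n \<Rightarrow> bool" where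
  "is_sdp_solution B \<delta> v r Z \<longleftrightarrow>
     Z \<in> sdp_feasible \<delta> v r \<and>
     (\<forall>W \<in> sdp_feasible \<delta> v r. sdp_obj B \<delta> Z \<le> sdp_obj B \<delta> W) \<and>
     (\<forall>W \<in> sdp_feasible \<delta> v r. sdp_obj B \<delta> W = sdp_obj B \<delta> Z \<longrightarrow> W = Z)"

end

theory Submission
  imports Defs
begin

text \<open>Write \<open>Y = Z - \<delta> I\<close> and \<open>y = r - \<delta> v\<close>, so that feasibility means \<open>Y \<succ> 0\<close> and \<open>Y v = y\<close>.
  The BFGS matrix \<open>Y\<^sub>* = B + y y\<^sup>T / v\<^sup>T y - B v v\<^sup>T B / v\<^sup>T B v\<close> is feasible, and its inverse
  \<open>P\<close> differs from \<open>B\<^sup>-\<^sup>1\<close> only by terms of the form \<open>v a\<^sup>T\<close> and \<open>b v\<^sup>T\<close>. Hence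
  \<open>tr (P Y) - tr (B\<^sup>-\<^sup>1 Y)\<close> is constant on the feasible set, and the excess of the objective over
  its value at \<open>Y\<^sub>*\<close> is \<open>tr (P Y) - n - ln det (P Y)\<close>. This is nonnegative and vanishes only
  for \<open>P Y = I\<close>, by \<open>ln det K \<le> tr K - n\<close> for positive definite \<open>K\<close>, which symmetric Gaussian
  elimination reduces to \<open>ln x \<le> x - 1\<close>.\<close>

lemma outer_nth [simp]: "outer a b $ i $ j = a $ i * b $ j"
  by (simp add: outer_def)

lemma outer_mulv: "outer a b *v x = (b \<bullet> x) *\<^sub>R a"
  by (simp add: vec_eq_iff matrix_vector_mult_def inner_vec_def sum_distrib_left mult_ac)

lemma transpose_outer: "transpose (outer a b) = outer b a"
  by (simp add: vec_eq_iff transpose_def)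

lemma trace_outer_mult: "trace (outer a b ** M) = b \<bullet> (M *v (a::real^'n))"
  unfolding trace_def matrix_matrix_mult_def inner_vec_def matrix_vector_mult_def
  by (simp add: sum_distrib_left mult_ac) (rule sum.swap)

lemma transpose_add: "transpose (A + B) = transpose A + transpose (B::real^'n^'m)"
  by (simp add: vec_eq_iff transpose_def)

lemma transpose_diff: "transpose (A - B) = transpose A - transpose (B::real^'n^'m)"
  by (simp add: vec_eq_iff transpose_def)

lemma matrix_add_rdistrib: "(A + B) ** M = A ** M + B ** (M::real^'p^'n)"
  by (simp add: matrix_matrix_mult_def vec_eq_iff sum.distrib algebra_simps)

lemma inner_mulv_transpose: "x \<bullet> (C *v w) = (transpose C *v x) \<bullet> (w::real^'n)"
  by (simp add: dot_lmul_matrix)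

lemma inner_mulv_sym: "transpose M = M \<Longrightarrow> v \<bullet> (M *v w) = (M *v v) \<bullet> (w::real^'n)"
  by (metis inner_mulv_transpose)

lemma mulv_axis [simp]: "(K *v axis i (1::real)) $ j = K $ j $ i"
  by (simp add: matrix_vector_mult_def axis_def if_distrib cong: if_cong)

lemma matrix_inv_left_right:
  fixes C :: "real^'n^'n"
  assumes "invertible C"
  shows "matrix_inv C ** C = mat 1" and "C ** matrix_inv C = mat 1"
proof -
  have "C ** matrix_inv C = mat 1 \<and> matrix_inv C ** C = mat 1"
    using assms unfolding invertible_def matrix_inv_def by (rule someI_ex)
  then show "matrix_inv C ** C = mat 1" "C ** matrix_inv C = mat 1" by auto
qed

lemma det_inverse_pos:
  fixes A P :: "real^'n^'n"
  assumes "P ** A = mat 1" and "0 < det A"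
  shows "0 < det P" and "ln (det P) = - ln (det A)"
proof -
  have prod: "det P * det A = 1" by (metis assms(1) det_mul det_I)
  then have "0 < det P * det A" by simp
  then show pos: "0 < det P" using assms(2) by (simp add: zero_less_mult_iff)
  show "ln (det P) = - ln (det A)"
    using arg_cong[OF prod, of ln] pos assms(2) by (simp add: ln_mult)
qed

subsection \<open>Positive definite matrices\<close>

lemma pd_mat_sym: "pd_mat K \<Longrightarrow> transpose K = K"
  by (simp add: pd_mat_def sym_mat_def)

lemma pd_mat_entry_sym: "pd_mat K \<Longrightarrow> K $ p $ q = K $ q $ p"
  unfolding pd_mat_def sym_mat_def by (metis transpose_def vec_lambda_beta)

lemma pd_mat_mulv_pos: "pd_mat B \<Longrightarrow> v \<noteq> 0 \<Longrightarrow> 0 < v \<bullet> (B *v v)"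
  by (simp add: pd_mat_def)

lemma pd_mat_diag_pos: "pd_mat K \<Longrightarrow> 0 < K $ i $ i"
proof -
  assume "pd_mat K"
  then have "0 < axis i 1 \<bullet> (K *v axis i (1::real))"
    unfolding pd_mat_def by (metis axis_eq_0_iff one_neq_zero)
  then show ?thesis by (simp add: inner_axis')
qed

lemma pd_mat_congruence:
  fixes K C :: "real^'n^'n"
  assumes "pd_mat K" and "invertible C"
  shows "pd_mat (C ** K ** transpose C)"
  unfolding pd_mat_def sym_mat_def
proof (intro conjI allI impI)
  show "transpose (C ** K ** transpose C) = C ** K ** transpose C"
    using pd_mat_sym[OF assms(1)] by (simp add: matrix_transpose_mul matrix_mul_assoc)
  fix x :: "real^'n" assume "x \<noteq> 0"
  moreover have "inj ((*v) (transpose C))"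
    by (simp add: assms(2) inj_matrix_vector_mult transpose_invertible)
  ultimately have "transpose C *v x \<noteq> 0"
    by (metis injD matrix_vector_mult_0_right)
  then have "0 < (transpose C *v x) \<bullet> (K *v (transpose C *v x))"
    using assms(1) unfolding pd_mat_def by blast
  then show "0 < x \<bullet> ((C ** K ** transpose C) *v x)"
    by (simp add: inner_mulv_transpose matrix_vector_mul_assoc[symmetric])
qed

lemma pd_mat_inverse:
  fixes P K :: "real^'n^'n"
  assumes "pd_mat K" and "P ** K = mat 1"
  shows "pd_mat P"
  unfolding pd_mat_def sym_mat_def
proof (intro conjI allI impI)
  have KP: "K ** P = mat 1" using assms(2) matrix_left_right_inverse by blast
  have "transpose P = transpose P ** (K ** P)" by (simp add: KP)
  also have "\<dots> = transpose (K ** P) ** P"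
    by (simp add: matrix_mul_assoc matrix_transpose_mul pd_mat_sym[OF assms(1)])
  finally show "transpose P = P" by (simp add: KP)
  fix x :: "real^'n" assume "x \<noteq> 0"
  moreover have "x = K *v (P *v x)" by (simp add: matrix_vector_mul_assoc KP)
  ultimately have "P *v x \<noteq> 0" by auto
  then have "0 < (P *v x) \<bullet> (K *v (P *v x))" using assms(1) by (simp add: pd_mat_def)
  then show "0 < x \<bullet> (P *v x)" by (simp add: matrix_vector_mul_assoc KP inner_commute)
qed

subsection \<open>Symmetric Gaussian elimination\<close>

definition pivot_col :: "real^'n^'n \<Rightarrow> 'n \<Rightarrow> real^'n" where
  "pivot_col K a = (\<chi> i. if i = a then 0 else K $ i $ a / K $ a $ a)"

definition pivot_elim :: "real^'n^'n \<Rightarrow> 'n \<Rightarrow> real^'n^'n" where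
  "pivot_elim K a = mat 1 - outer (pivot_col K a) (axis a 1)"

lemma det_mat1_minus_outer_axis:
  fixes c :: "real^'n"
  assumes "c $ a = 0"
  shows "det (mat 1 - outer c (axis a 1)) = 1"
proof -
  let ?I = "mat 1 :: real^'n^'n"
  have decomp: "- c = (\<Sum>j\<in>UNIV - {a}. (- c $ j) *s row j ?I)"
  proof (rule vec_eq_iff[THEN iffD2], intro allI)
    fix k
    have "(\<Sum>j\<in>UNIV - {a}. (- c $ j) *s row j ?I) $ k
        = (\<Sum>j\<in>UNIV - {a}. if j = k then - c $ j else 0)"
      unfolding sum_component by (rule sum.cong) (auto simp: row_def mat_def)
    also have "\<dots> = (if k \<in> UNIV - {a} then - c $ k else 0)"
      by (rule sum.delta) simp
    finally show "(- c) $ k = (\<Sum>j\<in>UNIV - {a}. (- c $ j) *s row j ?I) $ k"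
      using assms by auto
  qed
  have "- c \<in> vec.span {row j ?I | j. j \<noteq> a}"
    unfolding decomp by (intro vec.span_sum vec.span_scale vec.span_base) blast
  then have "det (\<chi> k. if k = a then row a ?I + - c else row k ?I) = det ?I"
    by (rule det_row_span)
  moreover have "(\<chi> k. if k = a then row a ?I + - c else row k ?I) = transpose (mat 1 - outer c (axis a 1))"
    by (simp add: vec_eq_iff row_def mat_def transpose_def axis_def)
  ultimately show ?thesis by simp
qed

lemma det_pivot_elim: "det (pivot_elim K a) = 1"
  unfolding pivot_elim_def by (rule det_mat1_minus_outer_axis) (simp add: pivot_col_def)

lemma pivot_elim_entries:
  fixes K :: "real^'n^'n"
  assumes "sym_mat K" and "K $ a $ a \<noteq> 0"
  shows "(pivot_elim K a ** K ** transpose (pivot_elim K a)) $ i $ j =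
    (if i = a \<and> j = a then K $ a $ a else if i = a \<or> j = a then 0
     else K $ i $ j - K $ i $ a * K $ a $ j / K $ a $ a)"
proof -
  let ?c = "pivot_col K a" and ?E = "pivot_elim K a"
  have symK: "K $ p $ q = K $ q $ p" for p q
    using assms(1) unfolding sym_mat_def by (metis transpose_def vec_lambda_beta)
  have Et: "transpose ?E *v w = w - (?c \<bullet> w) *\<^sub>R axis a 1" for w
    by (simp del: transpose_matrix_vector
        add: pivot_elim_def transpose_diff transpose_outer outer_mulv algebra_simps)
  have E: "?E *v w = w - (w $ a) *\<^sub>R ?c" for w
    by (simp add: pivot_elim_def outer_mulv algebra_simps inner_axis')
  have "(?E ** K ** transpose ?E) $ i $ j = (?E *v (K *v (transpose ?E *v axis j 1))) $ i"
    by (simp only: mulv_axis[symmetric] matrix_vector_mul_assoc matrix_mul_assoc)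
  also have "\<dots> = K $ i $ j - ?c $ j * K $ i $ a - (K $ a $ j - ?c $ j * K $ a $ a) * ?c $ i"
    by (simp del: transpose_matrix_vector add: Et E algebra_simps inner_axis)
  also have "\<dots> = (if i = a \<and> j = a then K $ a $ a else if i = a \<or> j = a then 0
     else K $ i $ j - K $ i $ a * K $ a $ j / K $ a $ a)"
    using assms(2) by (auto simp: pivot_col_def field_simps symK[of j a])
  finally show ?thesis .
qed

text \<open>The pivot lowers the \<open>i\<close>-th diagonal entry by \<open>K\<^sub>i\<^sub>a\<^sup>2 / K\<^sub>a\<^sub>a\<close>.\<close>
lemma pivot_elim_step:
  fixes K :: "real^'n^'n" and a :: 'n
  assumes "pd_mat K" and cleared: "\<forall>b\<in>S. \<forall>i. i \<noteq> b \<longrightarrow> K $ i $ b = 0"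
  defines "K' \<equiv> pivot_elim K a ** K ** transpose (pivot_elim K a)"
  shows "\<forall>b\<in>insert a S. \<forall>i. i \<noteq> b \<longrightarrow> K' $ i $ b = 0"
    and "K' $ i $ i \<le> K $ i $ i"
    and "(\<forall>i. K' $ i $ i = K $ i $ i) \<Longrightarrow> K' = K"
proof -
  have symK: "K $ p $ q = K $ q $ p" for p q using assms(1) by (rule pd_mat_entry_sym)
  have Kaa: "0 < K $ a $ a" using assms(1) by (rule pd_mat_diag_pos)
  have ent: "K' $ i $ j = (if i = a \<and> j = a then K $ a $ a else if i = a \<or> j = a then 0
     else K $ i $ j - K $ i $ a * K $ a $ j / K $ a $ a)" for i j
    unfolding K'_def using assms(1) Kaa by (intro pivot_elim_entries) (auto simp: pd_mat_def)
  have diag: "K' $ i $ i = K $ i $ i - (K $ i $ a)\<^sup>2 / K $ a $ a" if "i \<noteq> a" for i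
    using that by (simp add: ent symK[of a i] power2_eq_square)
  show "\<forall>b\<in>insert a S. \<forall>i. i \<noteq> b \<longrightarrow> K' $ i $ b = 0"
    using cleared by (auto simp: ent)
  show "K' $ i $ i \<le> K $ i $ i"
  proof (cases "i = a")
    case False
    then show ?thesis using Kaa by (simp add: diag)
  qed (simp add: ent)
  assume same: "\<forall>i. K' $ i $ i = K $ i $ i"
  have col: "K $ i $ a = 0" if "i \<noteq> a" for i
    using same diag[OF that] Kaa by simp
  moreover have "K $ a $ i = 0" if "i \<noteq> a" for i
    using col[OF that] symK[of a i] by simp
  ultimately show "K' = K"
    by (auto simp: vec_eq_iff ent)
qed

lemma pd_mat_reduce_columns:
  fixes K :: "real^'n^'n"
  assumes "pd_mat K" and "finite S"
  shows "\<exists>C. det C = 1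
     \<and> (\<forall>b\<in>S. \<forall>i. i \<noteq> b \<longrightarrow> (C ** K ** transpose C) $ i $ b = 0)
     \<and> (\<forall>i. (C ** K ** transpose C) $ i $ i \<le> K $ i $ i)
     \<and> ((\<forall>i. (C ** K ** transpose C) $ i $ i = K $ i $ i) \<longrightarrow> C ** K ** transpose C = K)"
  using assms(2)
proof (induction S rule: finite_induct)
  case empty
  show ?case by (rule exI[of _ "mat 1"]) simp
next
  case (insert a S)
  obtain C where detC: "det C = 1"
    and cleared: "\<forall>b\<in>S. \<forall>i. i \<noteq> b \<longrightarrow> (C ** K ** transpose C) $ i $ b = 0"
    and le: "\<forall>i. (C ** K ** transpose C) $ i $ i \<le> K $ i $ i"
    and same: "(\<forall>i. (C ** K ** transpose C) $ i $ i = K $ i $ i) \<longrightarrow> C ** K ** transpose C = K"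
    using insert.IH by (elim exE conjE) (rule that)
  define K' where "K' = C ** K ** transpose C"
  define E where "E = pivot_elim K' a"
  have pd: "pd_mat K'"
    unfolding K'_def using assms(1) detC by (intro pd_mat_congruence) (simp_all add: invertible_det_nz)
  note step = pivot_elim_step[OF pd cleared[folded K'_def], of a, folded E_def]
  have eq: "(E ** C) ** K ** transpose (E ** C) = E ** K' ** transpose E"
    by (simp add: K'_def matrix_transpose_mul matrix_mul_assoc)
  show ?case
  proof (rule exI[of _ "E ** C"], unfold eq, intro conjI impI)
    show "det (E ** C) = 1"
      by (simp add: det_mul E_def det_pivot_elim detC)
    show "\<forall>b\<in>insert a S. \<forall>i. i \<noteq> b \<longrightarrow> (E ** K' ** transpose E) $ i $ b = 0"
      by (rule step(1))
    show "\<forall>i. (E ** K' ** transpose E) $ i $ i \<le> K $ i $ i"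
      using step(2) le unfolding K'_def by (meson order.trans)
    assume all: "\<forall>i. (E ** K' ** transpose E) $ i $ i = K $ i $ i"
    then have "K' $ i $ i = K $ i $ i" for i
      using step(2)[of i] le unfolding K'_def by (metis order_antisym)
    then have K'K: "K' = K"
      using same unfolding K'_def by blast
    have "E ** K' ** transpose E = K'"
      by (rule step(3)) (use all K'K in simp)
    then show "E ** K' ** transpose E = K"
      using K'K by simp
  qed
qed

text \<open>Symmetric Gaussian elimination, i.e. an \<open>L D L\<^sup>T\<close> decomposition with unit-determinant \<open>L\<close>.
  That the diagonal can only shrink is Hadamard's inequality in disguise.\<close>
lemma pd_mat_diagonalize:
  fixes K :: "real^'n^'n"
  assumes "pd_mat K"
  obtains C where "det C = 1" and "pd_mat (C ** K ** transpose C)"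
    and "\<And>i j. i \<noteq> j \<Longrightarrow> (C ** K ** transpose C) $ i $ j = 0"
    and "\<And>i. (C ** K ** transpose C) $ i $ i \<le> K $ i $ i"
    and "(\<forall>i. (C ** K ** transpose C) $ i $ i = K $ i $ i) \<Longrightarrow> C ** K ** transpose C = K"
proof -
  obtain C where "det C = 1"
    and cleared: "\<forall>b\<in>UNIV. \<forall>i. i \<noteq> b \<longrightarrow> (C ** K ** transpose C) $ i $ b = 0"
    and le: "\<forall>i. (C ** K ** transpose C) $ i $ i \<le> K $ i $ i"
    and same: "(\<forall>i. (C ** K ** transpose C) $ i $ i = K $ i $ i) \<longrightarrow> C ** K ** transpose C = K"
    using pd_mat_reduce_columns[OF assms finite_class.finite_UNIV] by (elim exE conjE) (rule that)
  show thesis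
  proof (rule that)
    show "det C = 1" by fact
    show "pd_mat (C ** K ** transpose C)"
      using assms \<open>det C = 1\<close> by (intro pd_mat_congruence) (simp_all add: invertible_det_nz)
    show "(C ** K ** transpose C) $ i $ j = 0" if "i \<noteq> j" for i j
      using cleared that by blast
    show "(C ** K ** transpose C) $ i $ i \<le> K $ i $ i" for i
      using le by blast
    show "C ** K ** transpose C = K" if "\<forall>i. (C ** K ** transpose C) $ i $ i = K $ i $ i"
      using same that by blast
  qed
qed

lemma pd_mat_det_pos:
  fixes K :: "real^'n^'n"
  assumes "pd_mat K"
  shows "0 < det K"
proof -
  obtain C where C: "det C = 1" "pd_mat (C ** K ** transpose C)"
    "\<And>i j. i \<noteq> j \<Longrightarrow> (C ** K ** transpose C) $ i $ j = 0"
    "\<And>i. (C ** K ** transpose C) $ i $ i \<le> K $ i $ i"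
    "(\<forall>i. (C ** K ** transpose C) $ i $ i = K $ i $ i) \<Longrightarrow> C ** K ** transpose C = K"
    by (rule pd_mat_diagonalize[OF assms]) (rule that)
  have "det K = det (C ** K ** transpose C)" by (simp add: det_mul C(1))
  also have "\<dots> = (\<Prod>i\<in>UNIV. (C ** K ** transpose C) $ i $ i)"
    using C(3) by (intro det_diagonal) blast
  also have "\<dots> > 0"
    using C(2) by (intro prod_pos pd_mat_diag_pos)
  finally show ?thesis .
qed

text \<open>With \<open>C K C\<^sup>T = D\<close> diagonal, \<open>ln det K = \<Sum> ln D\<^sub>i\<^sub>i\<close> and
  \<open>tr K - n \<ge> \<Sum> (D\<^sub>i\<^sub>i - 1)\<close>, so the claim reduces to \<open>ln x \<le> x - 1\<close>.\<close>
lemma ln_det_le_trace: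
  fixes K :: "real^'n^'n"
  assumes "pd_mat K"
  shows "ln (det K) \<le> trace K - real CARD('n)"
    and "ln (det K) = trace K - real CARD('n) \<Longrightarrow> K = mat 1"
proof -
  obtain C where C: "det C = 1" "pd_mat (C ** K ** transpose C)"
    "\<And>i j. i \<noteq> j \<Longrightarrow> (C ** K ** transpose C) $ i $ j = 0"
    "\<And>i. (C ** K ** transpose C) $ i $ i \<le> K $ i $ i"
    "(\<forall>i. (C ** K ** transpose C) $ i $ i = K $ i $ i) \<Longrightarrow> C ** K ** transpose C = K"
    by (rule pd_mat_diagonalize[OF assms]) (rule that)
  define D where "D = C ** K ** transpose C"
  have Dpos: "0 < D $ i $ i" for i
    unfolding D_def using C(2) by (rule pd_mat_diag_pos)
  have "det K = det D" by (simp add: D_def det_mul C(1))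
  also have "\<dots> = (\<Prod>i\<in>UNIV. D $ i $ i)"
    using C(3) unfolding D_def by (intro det_diagonal) blast
  finally have "ln (det K) = (\<Sum>i\<in>UNIV. ln (D $ i $ i))"
    using Dpos by (simp add: ln_prod less_imp_neq[symmetric])
  then have gap: "trace K - real CARD('n) - ln (det K) = (\<Sum>i\<in>UNIV. K $ i $ i - 1 - ln (D $ i $ i))"
    by (simp add: trace_def sum_subtractf)
  have term_nonneg: "0 \<le> K $ i $ i - 1 - ln (D $ i $ i)" for i
    using C(4)[of i] ln_le_minus_one[OF Dpos[of i]] unfolding D_def by linarith
  have "0 \<le> (\<Sum>i\<in>UNIV. K $ i $ i - 1 - ln (D $ i $ i))"
    using term_nonneg by (simp add: sum_nonneg)
  then show "ln (det K) \<le> trace K - real CARD('n)"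
    using gap by linarith
  assume "ln (det K) = trace K - real CARD('n)"
  then have zero: "K $ i $ i - 1 - ln (D $ i $ i) = 0" for i
    using gap term_nonneg by (simp add: sum_nonneg_eq_0_iff)
  have DK: "D $ i $ i = K $ i $ i" and D1: "D $ i $ i = 1" for i
  proof -
    have "ln (D $ i $ i) = D $ i $ i - 1" "D $ i $ i = K $ i $ i"
      using zero[of i] C(4)[of i] ln_le_minus_one[OF Dpos[of i]] unfolding D_def by linarith+
    then show "D $ i $ i = K $ i $ i" "D $ i $ i = 1"
      using ln_eq_minus_one[OF Dpos[of i]] by auto
  qed
  have "D = K" using C(5) DK unfolding D_def by blast
  then show "K = mat 1"
    using C(3) D1 unfolding D_def by (auto simp: vec_eq_iff mat_def)
qed

lemma pd_mat_factor:
  fixes K :: "real^'n^'n"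
  assumes "pd_mat K"
  obtains R :: "real^'n^'n" where "invertible R" and "K = R ** transpose R"
proof -
  obtain C where C: "det C = 1" "pd_mat (C ** K ** transpose C)"
    "\<And>i j. i \<noteq> j \<Longrightarrow> (C ** K ** transpose C) $ i $ j = 0"
    "\<And>i. (C ** K ** transpose C) $ i $ i \<le> K $ i $ i"
    "(\<forall>i. (C ** K ** transpose C) $ i $ i = K $ i $ i) \<Longrightarrow> C ** K ** transpose C = K"
    by (rule pd_mat_diagonalize[OF assms]) (rule that)
  define D where "D = C ** K ** transpose C"
  have Dpos: "0 < D $ i $ i" for i
    unfolding D_def using C(2) by (rule pd_mat_diag_pos)
  define S :: "real^'n^'n" where "S = (\<chi> i j. if i = j then sqrt (D $ i $ i) else 0)"
  have "(S ** transpose S) $ i $ j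
      = (\<Sum>k\<in>UNIV. (if i = k then sqrt (D $ i $ i) else 0) * (if j = k then sqrt (D $ j $ j) else 0))"
    for i j by (simp add: matrix_matrix_mult_def S_def transpose_def)
  also have "\<dots> i j = (\<Sum>k\<in>UNIV. if k = i then (if i = j then D $ i $ i else 0) else 0)" for i j
    using Dpos[of i] by (intro sum.cong) auto
  finally have "(S ** transpose S) $ i $ j = (if i = j then D $ i $ i else 0)" for i j
    by simp
  then have SS: "S ** transpose S = D"
    using C(3) unfolding D_def by (auto simp: vec_eq_iff)
  have "det S = (\<Prod>i\<in>UNIV. sqrt (D $ i $ i))"
    by (subst det_diagonal) (simp_all add: S_def)
  then have "invertible S"
    using Dpos by (simp add: invertible_det_nz) (metis less_irrefl)
  have invC: "invertible C" using C(1) by (simp add: invertible_det_nz)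
  note Cinv = matrix_inv_left_right[OF invC]
  have "matrix_inv C ** D ** transpose (matrix_inv C)
      = (matrix_inv C ** C) ** K ** transpose (matrix_inv C ** C)"
    by (simp add: D_def matrix_transpose_mul matrix_mul_assoc)
  then have KD: "K = matrix_inv C ** D ** transpose (matrix_inv C)"
    by (simp add: Cinv(1))
  show thesis
  proof (rule that)
    have "invertible (matrix_inv C)" using Cinv unfolding invertible_def by blast
    then show "invertible (matrix_inv C ** S)" using \<open>invertible S\<close> by (rule invertible_mult)
    show "K = (matrix_inv C ** S) ** transpose (matrix_inv C ** S)"
      unfolding KD SS[symmetric] by (simp add: matrix_transpose_mul matrix_mul_assoc)
  qed
qed

lemma ln_det_mult_le_trace:
  fixes P Y :: "real^'n^'n"
  assumes "pd_mat P" and "pd_mat Y"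
  shows "ln (det (P ** Y)) \<le> trace (P ** Y) - real CARD('n)"
    and "ln (det (P ** Y)) = trace (P ** Y) - real CARD('n) \<Longrightarrow> P ** Y = mat 1"
proof -
  obtain R :: "real^'n^'n" where R: "invertible R" "Y = R ** transpose R"
    by (rule pd_mat_factor[OF assms(2)])
  define K where "K = transpose R ** P ** R"
  have "pd_mat K"
    using pd_mat_congruence[OF assms(1) transpose_invertible[OF R(1)]] by (simp add: K_def)
  moreover have "det K = det (P ** Y)"
    by (simp add: K_def R(2) det_mul)
  moreover have "trace K = trace (P ** Y)"
    using trace_mul_sym[of "transpose R" "P ** R"] by (simp add: K_def R(2) matrix_mul_assoc)
  ultimately show "ln (det (P ** Y)) \<le> trace (P ** Y) - real CARD('n)"
    and "ln (det (P ** Y)) = trace (P ** Y) - real CARD('n) \<Longrightarrow> P ** Y = mat 1"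
    using ln_det_le_trace[of K] matrix_left_right_inverse[of "transpose R" "P ** R"]
    by (auto simp: K_def R(2) matrix_mul_assoc)
qed

subsection \<open>The BFGS update\<close>

definition bfgs_update :: "real^'n^'n \<Rightarrow> real^'n \<Rightarrow> real^'n \<Rightarrow> real^'n^'n" where
  "bfgs_update B v y =
     B + (1 / (v \<bullet> y)) *\<^sub>R outer y y - (1 / (v \<bullet> (B *v v))) *\<^sub>R outer (B *v v) (B *v v)"

definition bfgs_inverse_update :: "real^'n^'n \<Rightarrow> real^'n \<Rightarrow> real^'n \<Rightarrow> real^'n^'n" where
  "bfgs_inverse_update H v y =
     H - (1 / (v \<bullet> y)) *\<^sub>R (outer v (H *v y) + outer (H *v y) v)
       + ((y \<bullet> (H *v y)) / (v \<bullet> y)\<^sup>2 + 1 / (v \<bullet> y)) *\<^sub>R outer v v"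

lemma bfgs_update_mulv:
  "bfgs_update B v y *v x =
     B *v x + ((y \<bullet> x) / (v \<bullet> y)) *\<^sub>R y - (((B *v v) \<bullet> x) / (v \<bullet> (B *v v))) *\<^sub>R (B *v v)"
  by (simp add: bfgs_update_def algebra_simps scaleR_matrix_vector_assoc[symmetric] outer_mulv)

lemma bfgs_update_secant:
  assumes "pd_mat B" and "0 < v \<bullet> y"
  shows "bfgs_update B v y *v v = y"
proof -
  have "0 < v \<bullet> (B *v v)" using assms by (auto intro: pd_mat_mulv_pos)
  moreover have "(B *v v) \<bullet> v = v \<bullet> (B *v v)" and "y \<bullet> v = v \<bullet> y"
    by (simp_all add: inner_commute)
  ultimately show ?thesis
    using assms(2) by (simp add: bfgs_update_mulv)
qed

text \<open>Writing \<open>x = w + t v\<close> with \<open>w\<close> \<open>B\<close>-orthogonal to \<open>v\<close>, the quadratic form of the update is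
  \<open>w\<^sup>T B w + (y\<^sup>T x)\<^sup>2 / (v\<^sup>T y)\<close>; the first term vanishes only if \<open>x\<close> is a multiple of \<open>v\<close>, and then
  the second one does not.\<close>
lemma pd_mat_bfgs_update:
  fixes B :: "real^'n^'n"
  assumes pdB: "pd_mat B" and q_pos: "0 < v \<bullet> y"
  shows "pd_mat (bfgs_update B v y)"
  unfolding pd_mat_def sym_mat_def
proof (intro conjI allI impI)
  define Bv where "Bv = B *v v"
  define c where "c = v \<bullet> Bv"
  have c_pos: "0 < c" using pdB q_pos by (auto simp: c_def Bv_def intro: pd_mat_mulv_pos)
  have symB: "transpose B = B" using pdB by (rule pd_mat_sym)
  show "transpose (bfgs_update B v y) = bfgs_update B v y"
    by (simp add: bfgs_update_def transpose_add transpose_diff transpose_scalar transpose_outer symB)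
  fix x :: "real^'n" assume "x \<noteq> 0"
  define t where "t = (Bv \<bullet> x) / c"
  define w where "w = x - t *\<^sub>R v"
  have BvX: "v \<bullet> (B *v z) = Bv \<bullet> z" for z
    using inner_mulv_sym[OF symB] by (simp add: Bv_def)
  have "w \<bullet> (B *v w) = x \<bullet> (B *v x) - t * (x \<bullet> Bv) - t * (v \<bullet> (B *v x)) + t * t * c"
    by (simp add: w_def Bv_def c_def algebra_simps inner_diff_left inner_diff_right)
  also have "\<dots> = x \<bullet> (B *v x) - (Bv \<bullet> x)\<^sup>2 / c"
    using c_pos by (simp add: BvX inner_commute[of x Bv] t_def field_simps power2_eq_square)
  finally have ww: "w \<bullet> (B *v w) = x \<bullet> (B *v x) - (Bv \<bullet> x)\<^sup>2 / c" .
  have form: "x \<bullet> (bfgs_update B v y *v x) = x \<bullet> (B *v x) - (Bv \<bullet> x)\<^sup>2 / c + (y \<bullet> x)\<^sup>2 / (v \<bullet> y)"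
    by (simp add: bfgs_update_mulv Bv_def[symmetric] c_def[symmetric] inner_add_right inner_diff_right
        inner_commute[of x y] inner_commute[of x Bv] power2_eq_square)
  show "0 < x \<bullet> (bfgs_update B v y *v x)"
  proof (cases "w = 0")
    case False
    with pdB have "0 < w \<bullet> (B *v w)" by (rule pd_mat_mulv_pos)
    moreover have "0 \<le> (y \<bullet> x)\<^sup>2 / (v \<bullet> y)" using q_pos by simp
    ultimately show ?thesis using form ww by linarith
  next
    case True
    then have "x = t *\<^sub>R v" by (simp add: w_def)
    then have "y \<bullet> x \<noteq> 0" using \<open>x \<noteq> 0\<close> q_pos by (auto simp: inner_commute)
    then have "0 < (y \<bullet> x)\<^sup>2 / (v \<bullet> y)" using q_pos by simp
    then show ?thesis using form ww True by simp
  qed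
qed

lemma bfgs_inverse_update_mulv:
  "bfgs_inverse_update H v y *v z =
     H *v z - (((H *v y) \<bullet> z) / (v \<bullet> y)) *\<^sub>R v - ((v \<bullet> z) / (v \<bullet> y)) *\<^sub>R (H *v y)
       + (((y \<bullet> (H *v y)) / (v \<bullet> y)\<^sup>2 + 1 / (v \<bullet> y)) * (v \<bullet> z)) *\<^sub>R v"
  by (simp add: bfgs_inverse_update_def algebra_simps scaleR_matrix_vector_assoc[symmetric] outer_mulv
      matrix_vector_right_distrib matrix_vector_mult_add_rdistrib)

lemma bfgs_inverse_update_inverse:
  fixes B :: "real^'n^'n"
  assumes pdB: "pd_mat B" and q_pos: "0 < v \<bullet> y"
  shows "bfgs_inverse_update (matrix_inv B) v y ** bfgs_update B v y = mat 1"
proof -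
  define H where "H = matrix_inv B"
  define q where "q = v \<bullet> y"
  define Bv where "Bv = B *v v"
  define c where "c = v \<bullet> Bv"
  define Hy where "Hy = H *v y"
  define h where "h = y \<bullet> Hy"
  have c_pos: "0 < c" using pdB q_pos by (auto simp: c_def Bv_def intro: pd_mat_mulv_pos)
  have "invertible B" using pd_mat_det_pos[OF pdB] by (simp add: invertible_det_nz)
  note HB = matrix_inv_left_right[OF this, folded H_def]
  have symB: "transpose B = B" using pdB by (rule pd_mat_sym)
  have symH: "transpose H = H" using pd_mat_inverse[OF pdB HB(1)] by (rule pd_mat_sym)
  have HBx: "H *v (B *v x) = x" and BHx: "B *v (H *v x) = x" for x
    by (simp_all add: matrix_vector_mul_assoc HB)
  have HyB: "Hy \<bullet> (B *v x) = y \<bullet> x" for x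
    using inner_mulv_sym[OF symB, of Hy x] by (simp add: Hy_def BHx)
  have BvX: "v \<bullet> (B *v x) = Bv \<bullet> x" for x
    using inner_mulv_sym[OF symB] by (simp add: Bv_def)
  have "bfgs_inverse_update H v y *v (bfgs_update B v y *v x) = x" for x
  proof -
    let ?Yx = "bfgs_update B v y *v x"
    have Yx: "?Yx = B *v x + ((y \<bullet> x) / q) *\<^sub>R y - ((Bv \<bullet> x) / c) *\<^sub>R Bv"
      by (simp add: bfgs_update_mulv q_def Bv_def c_def)
    have HYx: "H *v ?Yx = x + ((y \<bullet> x) / q) *\<^sub>R Hy - ((Bv \<bullet> x) / c) *\<^sub>R v"
      by (simp add: Yx HBx Bv_def Hy_def algebra_simps)
    have vYx: "v \<bullet> ?Yx = y \<bullet> x"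
      using q_pos c_pos by (simp add: Yx inner_add_right inner_diff_right BvX q_def[symmetric] c_def[symmetric])
    have HyYx: "Hy \<bullet> ?Yx = y \<bullet> x + (y \<bullet> x) * h / q - (Bv \<bullet> x) * q / c"
      by (simp add: Yx inner_add_right inner_diff_right HyB Bv_def q_def h_def inner_commute)
    have "bfgs_inverse_update H v y *v ?Yx = x
        + ((h / q\<^sup>2 + 1 / q) * (y \<bullet> x) - (Bv \<bullet> x) / c
           - (y \<bullet> x + (y \<bullet> x) * h / q - (Bv \<bullet> x) * q / c) / q) *\<^sub>R v"
      unfolding bfgs_inverse_update_mulv HYx vYx HyYx[unfolded Hy_def]
      by (simp add: q_def[symmetric] h_def[symmetric] Hy_def[symmetric] algebra_simps)
    also have "(h / q\<^sup>2 + 1 / q) * (y \<bullet> x) - (Bv \<bullet> x) / c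
           - (y \<bullet> x + (y \<bullet> x) * h / q - (Bv \<bullet> x) * q / c) / q = 0"
      using q_pos c_pos by (simp add: q_def field_simps power2_eq_square)
    finally show ?thesis by simp
  qed
  then show ?thesis
    by (simp add: H_def matrix_eq matrix_vector_mul_assoc[symmetric])
qed

subsection \<open>The log-det program\<close>

lemma sdp_obj_eq:
  fixes B W :: "real^'n^'n"
  assumes "pd_mat B" and "pd_mat (W - \<delta> *\<^sub>R mat 1)"
  shows "sdp_obj B \<delta> W = trace (matrix_inv B ** (W - \<delta> *\<^sub>R mat 1))
           + ln (det B) - ln (det (W - \<delta> *\<^sub>R mat 1)) - real CARD('n)"
proof -
  have "invertible B" using pd_mat_det_pos[OF assms(1)] by (simp add: invertible_det_nz)
  note inv_det = det_inverse_pos[OF matrix_inv_left_right(1)[OF this] pd_mat_det_pos[OF assms(1)]]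
  show ?thesis
    unfolding sdp_obj_def using inv_det pd_mat_det_pos[OF assms(2)] by (simp add: det_mul ln_mult)
qed

lemma is_sdp_solutionI:
  fixes B Y P :: "real^'n^'n"
  assumes "0 \<le> \<delta>" and pdB: "pd_mat B" and pdY: "pd_mat Y"
    and secant: "Y *v v = r - \<delta> *\<^sub>R v" and PY: "P ** Y = mat 1"
    and P: "P = matrix_inv B + outer v a + outer b v"
  shows "is_sdp_solution B \<delta> v r (Y + \<delta> *\<^sub>R mat 1)"
proof -
  let ?y = "r - \<delta> *\<^sub>R v" and ?n = "real CARD('n)"
  have pdP: "pd_mat P" using pdY PY by (rule pd_mat_inverse)
  have YP: "Y ** P = mat 1" using PY matrix_left_right_inverse by blast
  have trace_shift: "trace (P ** M) = trace (matrix_inv B ** M) + a \<bullet> ?y + ?y \<bullet> b"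
    if "transpose M = M" and "M *v v = ?y" for M
    using inner_mulv_sym[OF that(1), of v b] that(2)
    by (simp add: P matrix_add_rdistrib trace_add trace_outer_mult)
  have symY: "transpose Y = Y" using pdY by (rule pd_mat_sym)
  have gap: "sdp_obj B \<delta> W - sdp_obj B \<delta> (Y + \<delta> *\<^sub>R mat 1)
      = trace (P ** (W - \<delta> *\<^sub>R mat 1)) - ?n - ln (det (P ** (W - \<delta> *\<^sub>R mat 1)))"
    and pdW: "pd_mat (W - \<delta> *\<^sub>R mat 1)"
    if "W \<in> sdp_feasible \<delta> v r" for W
  proof -
    define Y' where "Y' = W - \<delta> *\<^sub>R mat 1"
    show pdY': "pd_mat (W - \<delta> *\<^sub>R mat 1)" using that by (simp add: sdp_feasible_def)
    have "Y' *v v = ?y" using that by (simp add: sdp_feasible_def Y'_def algebra_simps scaleR_matrix_vector_assoc[symmetric])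
    then have "trace (P ** Y') - trace (P ** Y) = trace (matrix_inv B ** Y') - trace (matrix_inv B ** Y)"
      using trace_shift[OF pd_mat_sym[OF pdY'[folded Y'_def]]] trace_shift[OF symY secant] by simp
    moreover have "ln (det (P ** Y')) = ln (det Y') - ln (det Y)"
      using det_inverse_pos[OF PY pd_mat_det_pos[OF pdY]] pd_mat_det_pos[OF pdY'[folded Y'_def]]
      by (simp add: det_mul ln_mult)
    ultimately show "sdp_obj B \<delta> W - sdp_obj B \<delta> (Y + \<delta> *\<^sub>R mat 1)
      = trace (P ** (W - \<delta> *\<^sub>R mat 1)) - ?n - ln (det (P ** (W - \<delta> *\<^sub>R mat 1)))"
      using sdp_obj_eq[OF pdB pdY'] sdp_obj_eq[of B "Y + \<delta> *\<^sub>R mat 1" \<delta>] pdB pdY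
      by (simp add: Y'_def[symmetric] PY trace_I)
  qed
  have "Y + \<delta> *\<^sub>R mat 1 \<in> sdp_feasible \<delta> v r"
    unfolding sdp_feasible_def psd_mat_def sym_mat_def
  proof (intro CollectI conjI allI)
    show "transpose (Y + \<delta> *\<^sub>R mat 1) = Y + \<delta> *\<^sub>R mat 1"
      by (simp add: transpose_add transpose_scalar symY)
    then show "transpose (Y + \<delta> *\<^sub>R mat 1) = Y + \<delta> *\<^sub>R mat 1" .
    show "(Y + \<delta> *\<^sub>R mat 1) *v v = r"
      by (simp add: secant algebra_simps scaleR_matrix_vector_assoc[symmetric])
    show "0 \<le> x \<bullet> ((Y + \<delta> *\<^sub>R mat 1) *v x)" for x
    proof -
      have "0 \<le> x \<bullet> (Y *v x)"
        using pdY unfolding pd_mat_def by (cases "x = 0") (auto intro: less_imp_le)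
      then show ?thesis
        using \<open>0 \<le> \<delta>\<close> by (simp add: algebra_simps scaleR_matrix_vector_assoc[symmetric] inner_add_right)
    qed
    show "pd_mat (Y + \<delta> *\<^sub>R mat 1 - \<delta> *\<^sub>R mat 1)" using pdY by simp
  qed
  then show ?thesis
    unfolding is_sdp_solution_def
  proof (intro conjI ballI impI)
    fix W assume W: "W \<in> sdp_feasible \<delta> v r"
    show "sdp_obj B \<delta> (Y + \<delta> *\<^sub>R mat 1) \<le> sdp_obj B \<delta> W"
      using ln_det_mult_le_trace(1)[OF pdP pdW[OF W]] gap[OF W] by simp
    assume "sdp_obj B \<delta> W = sdp_obj B \<delta> (Y + \<delta> *\<^sub>R mat 1)"
    then have "P ** (W - \<delta> *\<^sub>R mat 1) = mat 1"
      using ln_det_mult_le_trace(2)[OF pdP pdW[OF W]] gap[OF W] by simp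
    then have "Y = W - \<delta> *\<^sub>R mat 1"
      by (metis YP matrix_mul_assoc matrix_mul_lid matrix_mul_rid)
    then show "W = Y + \<delta> *\<^sub>R mat 1" by simp
  qed
qed

theorem lemma1:
  fixes B :: "real^'n^'n" and v r :: "real^'n" and \<delta> :: real
  assumes "\<delta> > 0" and "pd_mat B"
    and "(r - \<delta> *\<^sub>R v) \<bullet> v > 0"
  shows "is_sdp_solution B \<delta> v r
           (B + (1 / (v \<bullet> (r - \<delta> *\<^sub>R v))) *\<^sub>R outer (r - \<delta> *\<^sub>R v) (r - \<delta> *\<^sub>R v)
              - (1 / (v \<bullet> (B *v v))) *\<^sub>R outer (B *v v) (B *v v)
              + \<delta> *\<^sub>R mat 1)"
proof -
  define y where "y = r - \<delta> *\<^sub>R v"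
  define H where "H = matrix_inv B"
  have q_pos: "0 < v \<bullet> y" using assms(3) by (simp add: y_def inner_commute)
  define \<rho> where "\<rho> = 1 / (v \<bullet> y)"
  define \<kappa> where "\<kappa> = (y \<bullet> (H *v y)) / (v \<bullet> y)\<^sup>2 + 1 / (v \<bullet> y)"
  have "bfgs_inverse_update H v y = H + outer v (\<kappa> *\<^sub>R v - \<rho> *\<^sub>R (H *v y)) + outer (- \<rho> *\<^sub>R (H *v y)) v"
    by (simp add: bfgs_inverse_update_def \<rho>_def \<kappa>_def vec_eq_iff algebra_simps)
  moreover have "bfgs_update B v y *v v = r - \<delta> *\<^sub>R v"
    using bfgs_update_secant[OF assms(2) q_pos] by (simp add: y_def)
  ultimately have "is_sdp_solution B \<delta> v r (bfgs_update B v y + \<delta> *\<^sub>R mat 1)"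
    using less_imp_le[OF assms(1)] assms(2) pd_mat_bfgs_update[OF assms(2) q_pos]
      bfgs_inverse_update_inverse[OF assms(2) q_pos, folded H_def]
    by (intro is_sdp_solutionI[where P = "bfgs_inverse_update H v y"]) (simp_all add: H_def)
  then show ?thesis by (simp add: bfgs_update_def y_def)
qed

end
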